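(* Let $1<p<\infty$, let $q$ be defined by $\frac1p+\frac1q=1$, and let $n,m\ge 0$ be integers. If $n\equiv m\pmod 2$, then $$\binom{n+m}{\frac{n+m}{2}} \le \Big(\sum_{i=0}^{m}\binom{m}{i}^p\Big)^{1/p}\Big(\sum_{j=0}^{n}\binom{n}{j}^q\Big)^{1/q}.$$ If $n-m\equiv 1\pmod 2$, then $$\frac12\binom{n+m+1}{\frac{n+m+1}{2}} \le \Big(\sum_{i=0}^{m}\binom{m}{i}^p\Big)^{1/p}\Big(\sum_{j=0}^{n}\binom{n}{j}^q\Big)^{1/q}.$$
   Context: Binomial coefficients $\binom{n}{i}$ for integers $0\le i\le n$ have their usual meaning. *)

theory Defs
  imports Complex_Main
begin

end

theory Submission
  imports Defs "HOL-Analysis.Analysis"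
begin

text \<open>Vandermonde's identity writes \<open>(n + m) choose r\<close> as the inner product of the vectors
  \<open>(m choose k)\<^sub>k\<close> and \<open>(n choose (r - k))\<^sub>k\<close>; Hoelder's inequality bounds it by the product of
  their \<open>p\<close>- and \<open>q\<close>-norms, and the second vector is a subfamily of \<open>(n choose j)\<^sub>j\<close>.
  The central binomial coefficient is the case \<open>r = (n + m) div 2\<close>; for odd \<open>n + m\<close> Pascal's
  rule and symmetry give \<open>(n + m + 1) choose ((n + m + 1) div 2) = 2 * ((n + m) choose ((n + m) div 2))\<close>.\<close>

lemma conjugate_exponent_gt_one:
  fixes p q :: real
  assumes "1 < p" and "1 / p + 1 / q = 1"
  shows "1 < q"
proof -
  have "1 / q = 1 - 1 / p" using assms(2) by simp
  moreover have "0 < 1 - 1 / p" "1 - 1 / p < 1" using assms(1) by auto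
  ultimately have "0 < 1 / q" "1 / q < 1" by auto
  then show ?thesis by (simp add: divide_less_eq zero_less_divide_iff)
qed

lemma Holder_inequality_sum:
  fixes a b :: "'a \<Rightarrow> real" and p q :: real
  assumes "finite I" and p: "1 < p" and q: "1 < q" and pq: "1 / p + 1 / q = 1"
    and a: "\<And>i. i \<in> I \<Longrightarrow> 0 \<le> a i" and b: "\<And>i. i \<in> I \<Longrightarrow> 0 \<le> b i"
  shows "(\<Sum>i\<in>I. a i * b i)
           \<le> (\<Sum>i\<in>I. a i powr p) powr (1 / p) * (\<Sum>i\<in>I. b i powr q) powr (1 / q)"
proof -
  define A where "A = (\<Sum>i\<in>I. a i powr p)"
  define B where "B = (\<Sum>i\<in>I. b i powr q)"
  show ?thesis
  proof (cases "A = 0 \<or> B = 0")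
    case True
    then have "(\<Sum>i\<in>I. a i * b i) = 0"
      using \<open>finite I\<close> p q a b by (auto simp: A_def B_def sum_nonneg_eq_0_iff)
    then show ?thesis by simp
  next
    case False
    moreover have "0 \<le> A" "0 \<le> B" by (simp_all add: A_def B_def sum_nonneg)
    ultimately have A: "0 < A" and B: "0 < B" by auto
    define \<alpha> where "\<alpha> = A powr (1 / p)"
    define \<beta> where "\<beta> = B powr (1 / q)"
    have "0 < \<alpha>" "0 < \<beta>" using A B by (auto simp: \<alpha>_def \<beta>_def)
    have \<alpha>: "\<alpha> powr p = A" and \<beta>: "\<beta> powr q = B"
      using A B p q by (simp_all add: \<alpha>_def \<beta>_def powr_powr)
    have Young: "a i * b i / (\<alpha> * \<beta>) \<le> a i powr p / (A * p) + b i powr q / (B * q)"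
      if "i \<in> I" for i
    proof -
      have "(a i / \<alpha>) * (b i / \<beta>) \<le> (a i / \<alpha>) powr p / p + (b i / \<beta>) powr q / q"
        using Youngs_inequality[of p q "a i / \<alpha>" "b i / \<beta>"] p q pq a b that \<open>0 < \<alpha>\<close> \<open>0 < \<beta>\<close>
        by auto
      also have "\<dots> = a i powr p / (A * p) + b i powr q / (B * q)"
        using a b that \<open>0 < \<alpha>\<close> \<open>0 < \<beta>\<close> \<alpha> \<beta> by (simp add: powr_divide)
      finally show ?thesis by simp
    qed
    have "(\<Sum>i\<in>I. a i * b i) / (\<alpha> * \<beta>) = (\<Sum>i\<in>I. a i * b i / (\<alpha> * \<beta>))"
      by (simp add: sum_divide_distrib)
    also have "\<dots> \<le> (\<Sum>i\<in>I. a i powr p / (A * p) + b i powr q / (B * q))"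
      by (rule sum_mono) (rule Young)
    also have "\<dots> = A / (A * p) + B / (B * q)"
      by (simp add: sum.distrib A_def B_def sum_divide_distrib)
    also have "\<dots> = 1" using A B pq by simp
    finally have "(\<Sum>i\<in>I. a i * b i) \<le> \<alpha> * \<beta>"
      using \<open>0 < \<alpha>\<close> \<open>0 < \<beta>\<close> by (simp add: divide_le_eq)
    then show ?thesis by (simp add: \<alpha>_def \<beta>_def A_def B_def)
  qed
qed

lemma vandermonde_atMost_min:
  "real ((m + n) choose r) = (\<Sum>k\<le>min m r. real (m choose k) * real (n choose (r - k)))"
proof -
  have "real ((m + n) choose r) = (\<Sum>k\<le>r. real (m choose k) * real (n choose (r - k)))"
    by (subst vandermonde[symmetric]) simp
  also have "\<dots> = (\<Sum>k\<le>min m r. real (m choose k) * real (n choose (r - k)))"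
    by (rule sum.mono_neutral_right) auto
  finally show ?thesis .
qed

lemma sum_binomial_powr_reflect_le:
  fixes q :: real
  assumes "s \<le> r"
  shows "(\<Sum>k\<le>s. real (n choose (r - k)) powr q) \<le> (\<Sum>j=0..n. real (n choose j) powr q)"
proof -
  have "(\<Sum>k\<le>s. real (n choose (r - k)) powr q)
          = (\<Sum>j\<in>(\<lambda>k. r - k) ` {..s}. real (n choose j) powr q)"
    using assms by (subst sum.reindex) (auto simp: inj_on_def)
  also have "\<dots> = (\<Sum>j\<in>(\<lambda>k. r - k) ` {..s} \<inter> {0..n}. real (n choose j) powr q)"
    by (rule sum.mono_neutral_right) auto
  also have "\<dots> \<le> (\<Sum>j=0..n. real (n choose j) powr q)"
    by (rule sum_mono2) auto
  finally show ?thesis .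
qed

lemma choose_le_Holder_bound:
  fixes p q :: real and n m r :: nat
  assumes p: "1 < p" and pq: "1 / p + 1 / q = 1"
  shows "real ((n + m) choose r)
           \<le> (\<Sum>i=0..m. real (m choose i) powr p) powr (1 / p)
              * (\<Sum>j=0..n. real (n choose j) powr q) powr (1 / q)"
proof -
  have q: "1 < q" using conjugate_exponent_gt_one[OF p pq] .
  let ?s = "min m r"
  have "real ((n + m) choose r) = (\<Sum>k\<le>?s. real (m choose k) * real (n choose (r - k)))"
    using vandermonde_atMost_min[of m n r] by (simp add: add.commute)
  also have "\<dots> \<le> (\<Sum>k\<le>?s. real (m choose k) powr p) powr (1 / p)
                    * (\<Sum>k\<le>?s. real (n choose (r - k)) powr q) powr (1 / q)"
    by (rule Holder_inequality_sum) (use p q pq in auto)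
  also have "\<dots> \<le> (\<Sum>i=0..m. real (m choose i) powr p) powr (1 / p)
                    * (\<Sum>j=0..n. real (n choose j) powr q) powr (1 / q)"
  proof (intro mult_mono powr_mono2)
    show "(\<Sum>k\<le>?s. real (m choose k) powr p) \<le> (\<Sum>i=0..m. real (m choose i) powr p)"
      by (rule sum_mono2) auto
    show "(\<Sum>k\<le>?s. real (n choose (r - k)) powr q) \<le> (\<Sum>j=0..n. real (n choose j) powr q)"
      by (rule sum_binomial_powr_reflect_le) simp
  qed (use p q in \<open>auto intro: sum_nonneg\<close>)
  finally show ?thesis .
qed

lemma choose_odd_Suc_middle:
  assumes "odd N"
  shows "(Suc N choose (Suc N div 2)) = 2 * (N choose (N div 2))"
proof -
  obtain c where N: "N = 2 * c + 1" using assms oddE by blast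
  have "(2 * c + 1) choose Suc c = (2 * c + 1) choose c"
    using binomial_symmetric[of "Suc c" "2 * c + 1"] by simp
  then show ?thesis using N by simp
qed

theorem mainTheorem7:
  fixes p q :: real and n m :: nat
  assumes "1 < p" and "1 / p + 1 / q = 1"
  shows "(even (n + m) \<longrightarrow>
            real ((n + m) choose ((n + m) div 2))
              \<le> (\<Sum>i=0..m. real (m choose i) powr p) powr (1 / p)
                 * (\<Sum>j=0..n. real (n choose j) powr q) powr (1 / q))
       \<and> (odd (n + m) \<longrightarrow>
            (1 / 2) * real ((n + m + 1) choose ((n + m + 1) div 2))
              \<le> (\<Sum>i=0..m. real (m choose i) powr p) powr (1 / p)
                 * (\<Sum>j=0..n. real (n choose j) powr q) powr (1 / q))"
proof (intro conjI impI)
  show "real ((n + m) choose ((n + m) div 2))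
          \<le> (\<Sum>i=0..m. real (m choose i) powr p) powr (1 / p)
             * (\<Sum>j=0..n. real (n choose j) powr q) powr (1 / q)"
    using choose_le_Holder_bound[OF assms] .
next
  assume "odd (n + m)"
  then have "(1 / 2) * real ((n + m + 1) choose ((n + m + 1) div 2))
               = real ((n + m) choose ((n + m) div 2))"
    using choose_odd_Suc_middle[of "n + m"] by simp
  then show "(1 / 2) * real ((n + m + 1) choose ((n + m + 1) div 2))
               \<le> (\<Sum>i=0..m. real (m choose i) powr p) powr (1 / p)
                  * (\<Sum>j=0..n. real (n choose j) powr q) powr (1 / q)"
    using choose_le_Holder_bound[OF assms] by simp
qed

end
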